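(* Any circuit on $n$ qubits composed entirely of controlled-not gates computes an operator that can be embedded, using $O(n^2)$ ancillae, in a quantum circuit of depth $O(\log n)$ (with absolute implied constants). Consequently, any family $(C_n)_{n\ge1}$ of such circuits, $C_n$ acting on $n$ qubits, defines a family of operators belonging to $\mathbf{QNC}^1$.
   Context: Qubits have computational basis $|0\rangle,|1\rangle$. The controlled-not gate on (control, target) is the two-qubit unitary $|a,b\rangle\mapsto|a,a\oplus b\rangle$. A circuit composed of controlled-not gates is any finite product of such gates applied to pairs of the $n$ qubits. A one-layer circuit is a tensor product of arbitrary one-qubit and two-qubit unitary gates acting on pairwise disjoint sets of qubits; a quantum circuit of depth $d$ is a product of $d$ one-layer circuits. An operator $F$ on $n$ qubits is embedded in an operator $M$ on $n+m$ qubits using $m$ ancillae if $M(|\psi\rangle\otimes|0\cdots0\rangle)=(F|\psi\rangle)\otimes|0\cdots0\rangle$ for all $|\psi\rangle$. A family $F=(F(n))_{n\ge1}$, $F(n)$ a unitary on $n$ qubits, is in $\mathbf{QNC}^1$ if there are constants $c_1,c_2,j$ such that for all $n$, $F(n)$ can be embedded in a quantum circuit of depth at most $c_1\log n$ using at most $c_2n^j$ ancillae. *)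

theory Defs
  imports Complex_Main "Jordan_Normal_Form.Schur_Decomposition"
begin

(* Basis states of N qubits are indexed by x < 2^N; qubit q of basis state x is bit q of x
   (little endian): qubit q has value  x div 2^q mod 2. *)
definition qbit :: "nat \<Rightarrow> nat \<Rightarrow> nat" where
  "qbit x q = x div 2 ^ q mod 2"

definition agree_except :: "nat set \<Rightarrow> nat \<Rightarrow> nat \<Rightarrow> bool" where
  "agree_except S x y \<longleftrightarrow> (\<forall>q. q \<notin> S \<longrightarrow> qbit x q = qbit y q)"

definition unitary_mat :: "nat \<Rightarrow> complex mat \<Rightarrow> bool" where
  "unitary_mat k A \<longleftrightarrow> A \<in> carrier_mat k k \<and> A * mat_adjoint A = 1\<^sub>m k
      \<and> mat_adjoint A * A = 1\<^sub>m k"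

definition embed1 :: "nat \<Rightarrow> complex mat \<Rightarrow> nat \<Rightarrow> complex mat" where
  "embed1 N U q = mat (2 ^ N) (2 ^ N)
     (\<lambda>(x, y). if agree_except {q} x y then U $$ (qbit x q, qbit y q) else 0)"

(* two-qubit gate U (4x4, basis |a,b> with index 2a+b) acting on qubits (q1,q2) *)
definition embed2 :: "nat \<Rightarrow> complex mat \<Rightarrow> nat \<Rightarrow> nat \<Rightarrow> complex mat" where
  "embed2 N U q1 q2 = mat (2 ^ N) (2 ^ N)
     (\<lambda>(x, y). if agree_except {q1, q2} x y
        then U $$ (2 * qbit x q1 + qbit x q2, 2 * qbit y q1 + qbit y q2) else 0)"

datatype gate = Gate1 "complex mat" nat | Gate2 "complex mat" nat nat

fun gate_support :: "gate \<Rightarrow> nat set" where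
  "gate_support (Gate1 U q) = {q}"
| "gate_support (Gate2 U q1 q2) = {q1, q2}"

fun valid_gate :: "nat \<Rightarrow> gate \<Rightarrow> bool" where
  "valid_gate N (Gate1 U q) \<longleftrightarrow> unitary_mat 2 U \<and> q < N"
| "valid_gate N (Gate2 U q1 q2) \<longleftrightarrow> unitary_mat 4 U \<and> q1 < N \<and> q2 < N \<and> q1 \<noteq> q2"

fun gate_op :: "nat \<Rightarrow> gate \<Rightarrow> complex mat" where
  "gate_op N (Gate1 U q) = embed1 N U q"
| "gate_op N (Gate2 U q1 q2) = embed2 N U q1 q2"

definition valid_layer :: "nat \<Rightarrow> gate list \<Rightarrow> bool" where
  "valid_layer N L \<longleftrightarrow> (\<forall>g \<in> set L. valid_gate N g) \<and>
     (\<forall>i < length L. \<forall>j < length L. i \<noteq> j \<longrightarrow>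
        gate_support (L ! i) \<inter> gate_support (L ! j) = {})"

definition layer_op :: "nat \<Rightarrow> gate list \<Rightarrow> complex mat" where
  "layer_op N L = foldr (\<lambda>g A. A * gate_op N g) L (1\<^sub>m (2 ^ N))"

(* a quantum circuit = list of layers; its depth is the length of the list;
   the first layer is applied first *)
definition valid_circuit :: "nat \<Rightarrow> gate list list \<Rightarrow> bool" where
  "valid_circuit N C \<longleftrightarrow> (\<forall>L \<in> set C. valid_layer N L)"

definition circuit_op :: "nat \<Rightarrow> gate list list \<Rightarrow> complex mat" where
  "circuit_op N C = foldr (\<lambda>L A. A * layer_op N L) C (1\<^sub>m (2 ^ N))"

(* |psi> \<otimes> |0...0> : ancillae are qubits n..n+m-1 *)
definition ext_anc :: "nat \<Rightarrow> nat \<Rightarrow> complex vec \<Rightarrow> complex vec" where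
  "ext_anc n m v = vec (2 ^ (n + m)) (\<lambda>x. if x < 2 ^ n then v $ x else 0)"

definition embeds :: "nat \<Rightarrow> nat \<Rightarrow> complex mat \<Rightarrow> complex mat \<Rightarrow> bool" where
  "embeds n m F M \<longleftrightarrow> F \<in> carrier_mat (2 ^ n) (2 ^ n) \<and> M \<in> carrier_mat (2 ^ (n + m)) (2 ^ (n + m))
     \<and> (\<forall>\<psi> \<in> carrier_vec (2 ^ n). M *\<^sub>v ext_anc n m \<psi> = ext_anc n m (F *\<^sub>v \<psi>))"

(* controlled-not on (control, target): |a,b> \<mapsto> |a, a xor b>, index 2a+b *)
definition cnot_mat :: "complex mat" where
  "cnot_mat = mat 4 4 (\<lambda>(i, j). if i = 2 * (j div 2) + (j div 2 + j mod 2) mod 2 then 1 else 0)"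

(* a CNOT circuit on n qubits: list of (control, target) pairs, applied left to right *)
definition valid_cnot_circuit :: "nat \<Rightarrow> (nat \<times> nat) list \<Rightarrow> bool" where
  "valid_cnot_circuit n gs \<longleftrightarrow> (\<forall>(c, t) \<in> set gs. c < n \<and> t < n \<and> c \<noteq> t)"

definition cnot_circuit_op :: "nat \<Rightarrow> (nat \<times> nat) list \<Rightarrow> complex mat" where
  "cnot_circuit_op n gs = foldr (\<lambda>(c, t) A. A * embed2 n cnot_mat c t) gs (1\<^sub>m (2 ^ n))"

definition in_QNC1 :: "(nat \<Rightarrow> complex mat) \<Rightarrow> bool" where
  "in_QNC1 F \<longleftrightarrow> (\<forall>n \<ge> 1. unitary_mat (2 ^ n) (F n)) \<and>
     (\<exists>c1 c2 :: real. \<exists>j :: nat. \<forall>n \<ge> 1. \<exists>m C.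
        valid_circuit (n + m) C \<and> real (length C) \<le> c1 * log 2 (real n) \<and>
        real m \<le> c2 * real n ^ j \<and> embeds n m (F n) (circuit_op (n + m) C))"

end

(*
  A CNOT circuit maps basis states by an invertible GF(2)-linear map x -> M x, so its operator
  is the permutation matrix of that map and every output bit is the parity of some input bits.
  With O(n^2) ancillae all n parities can be computed in depth O(log n): fan each input bit out
  into n copies by repeated doubling, route the copies into one binary tree per output bit, and
  sum the trees level by level.  Copying the roots into target wires and replaying the layers
  backwards XORs the parities into the targets and restores every ancilla.  One such block writes
  y = M x into a second register, a second one (for the inverse circuit, registers exchanged)
  erases x, and two layers of parallel CNOTs move y back.  With K = floor_log n + 1 this takes
  depth 8 K + 12 and n + 2 n 2^K <= 5 n^2 ancillae.
*)
theory Submission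
  imports Defs "HOL-Library.Discrete_Functions"
begin

unbundle bit_operations_syntax

lemma qbit_eq_of_bool_bit: "qbit x q = of_bool (bit x q)"
  by (simp add: qbit_def bit_iff_odd odd_iff_mod_2_eq_one)

lemma less_power_iff_bits: "(x::nat) < 2 ^ N \<longleftrightarrow> (\<forall>q. bit x q \<longrightarrow> q < N)"
proof -
  have "x < 2 ^ N \<longleftrightarrow> take_bit N x = x" by (simp add: take_bit_nat_eq_self_iff)
  also have "\<dots> \<longleftrightarrow> (\<forall>q. bit x q \<longrightarrow> q < N)"
    by (auto simp: bit_eq_iff bit_take_bit_iff)
  finally show ?thesis .
qed

lemma not_bit_if_less_power: "(x::nat) < 2 ^ N \<Longrightarrow> N \<le> q \<Longrightarrow> \<not> bit x q"
  by (auto simp: less_power_iff_bits)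

section \<open>CNOT circuits as maps on basis states\<close>

definition cnot_fun :: "nat \<Rightarrow> nat \<Rightarrow> nat \<Rightarrow> nat" where
  "cnot_fun c t x = (if bit x c then flip_bit t x else x)"

lemma bit_cnot_fun [simp]:
  "bit (cnot_fun c t x) q \<longleftrightarrow> (if q = t then bit x t \<noteq> bit x c else bit x q)"
  by (auto simp: cnot_fun_def bit_flip_bit_iff)

lemma cnot_fun_cnot_fun: "c \<noteq> t \<Longrightarrow> cnot_fun c t (cnot_fun c t x) = x"
  by (rule bit_eqI) auto

lemma cnot_fun_less: "t < N \<Longrightarrow> x < 2 ^ N \<Longrightarrow> cnot_fun c t x < 2 ^ N"
  by (auto simp: less_power_iff_bits)

lemma cnot_fun_xor: "cnot_fun c t (x XOR y) = cnot_fun c t x XOR cnot_fun c t y"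
  by (rule bit_eqI) (auto simp: bit_xor_iff)

definition cnots :: "(nat \<times> nat) list \<Rightarrow> nat \<Rightarrow> nat" where
  "cnots gs = fold (\<lambda>(c, t). cnot_fun c t) gs"

lemma cnots_Nil [simp]: "cnots [] = id"
  and cnots_Cons [simp]: "cnots ((c, t) # gs) = cnots gs \<circ> cnot_fun c t"
  and cnots_append [simp]: "cnots (gs @ hs) = cnots hs \<circ> cnots gs"
  by (simp_all add: cnots_def)

lemma valid_cnot_circuit_simps [simp]:
  "valid_cnot_circuit N [] \<longleftrightarrow> True"
  "valid_cnot_circuit N ((c, t) # gs) \<longleftrightarrow> c < N \<and> t < N \<and> c \<noteq> t \<and> valid_cnot_circuit N gs"
  "valid_cnot_circuit N (gs @ hs) \<longleftrightarrow> valid_cnot_circuit N gs \<and> valid_cnot_circuit N hs"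
  "valid_cnot_circuit N (rev gs) \<longleftrightarrow> valid_cnot_circuit N gs"
  "valid_cnot_circuit N (concat Ls) \<longleftrightarrow> (\<forall>L \<in> set Ls. valid_cnot_circuit N L)"
  by (auto simp: valid_cnot_circuit_def)

lemma cnots_rev_cnots: "valid_cnot_circuit N gs \<Longrightarrow> cnots (rev gs) (cnots gs x) = x"
  by (induction gs arbitrary: x) (auto simp: cnot_fun_cnot_fun)

lemma cnots_xor: "cnots gs (x XOR y) = cnots gs x XOR cnots gs y"
  by (induction gs arbitrary: x y) (auto simp: cnot_fun_xor)

lemma cnots_less: "valid_cnot_circuit N gs \<Longrightarrow> x < 2 ^ N \<Longrightarrow> cnots gs x < 2 ^ N"
  by (induction gs arbitrary: x) (auto simp: cnot_fun_less)

lemma bit_cnots_nontarget: "t \<notin> snd ` set gs \<Longrightarrow> bit (cnots gs x) t = bit x t"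
  by (induction gs arbitrary: x) auto

lemma cnots_fixed: "\<forall>(c, t) \<in> set gs. \<not> bit x c \<Longrightarrow> cnots gs x = x"
  by (induction gs) (auto simp: cnot_fun_def)

lemma cnots_conjugate:
  assumes "valid_cnot_circuit N G"
    and "\<forall>(c, t) \<in> set M. t \<notin> fst ` set G"
  shows "cnots (G @ M @ rev G) x = x XOR (cnots M (cnots G x) XOR cnots G x)"
proof -
  define y where "y = cnots G x"
  define d where "d = cnots M y XOR y"
  (* by linearity, undoing G leaves the mask d written by M intact, as d avoids the controls of G *)
  have "\<not> bit d c" if "c \<in> fst ` set G" for c
  proof -
    have "c \<notin> snd ` set M" using that assms(2) by force
    then show ?thesis by (simp add: d_def bit_xor_iff bit_cnots_nontarget)
  qed
  then have "cnots (rev G) d = d"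
    by (intro cnots_fixed) force
  moreover have "cnots M y = y XOR d"
    by (auto intro: bit_eqI simp: d_def bit_xor_iff)
  ultimately have "cnots (rev G) (cnots M y) = x XOR d"
    by (simp add: cnots_xor y_def cnots_rev_cnots[OF assms(1)])
  then show ?thesis by (simp add: y_def d_def)
qed

definition cnot_layer :: "(nat \<times> nat) list \<Rightarrow> bool" where
  "cnot_layer L \<longleftrightarrow> distinct (map fst L @ map snd L)"

lemma cnot_layer_map:
  assumes "distinct xs" "inj_on (fst \<circ> f) (set xs)" "inj_on (snd \<circ> f) (set xs)"
    and "\<And>u v. u \<in> set xs \<Longrightarrow> v \<in> set xs \<Longrightarrow> fst (f u) \<noteq> snd (f v)"
  shows "cnot_layer (map f xs)"
  using assms by (force simp: cnot_layer_def distinct_map)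

lemma cnot_layer_rev [simp]: "cnot_layer (rev L) \<longleftrightarrow> cnot_layer L"
  by (auto simp: cnot_layer_def rev_map[symmetric])

lemma cnot_layer_ne: "cnot_layer L \<Longrightarrow> (c, t) \<in> set L \<Longrightarrow> c \<noteq> t"
  by (force simp: cnot_layer_def)

lemma bit_cnots_layer_target:
  assumes "cnot_layer L" and "(c, t) \<in> set L"
  shows "bit (cnots L x) t \<longleftrightarrow> bit x t \<noteq> bit x c"
  using assms
proof (induction L arbitrary: x)
  case Nil
  then show ?case by simp
next
  case (Cons g L)
  obtain c' t' where g: "g = (c', t')" by force
  have layer: "cnot_layer L" and fresh: "c' \<notin> snd ` set L" "t' \<notin> snd ` set L" "t' \<notin> fst ` set L"
    and ne: "c' \<noteq> t'"
    using Cons.prems(1) by (auto simp: cnot_layer_def g)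
  show ?case
  proof (cases "(c, t) = (c', t')")
    case True
    then show ?thesis using fresh ne g by (simp add: bit_cnots_nontarget)
  next
    case False
    then have "(c, t) \<in> set L" using Cons.prems(2) g by auto
    moreover from this have "c \<noteq> t'" "t \<noteq> t'" using fresh by (auto simp: image_iff)
    ultimately show ?thesis using Cons.IH[OF layer] g by simp
  qed
qed

definition copy_layer :: "nat \<Rightarrow> nat \<Rightarrow> nat \<Rightarrow> (nat \<times> nat) list" where
  "copy_layer u v n = map (\<lambda>j. (u + j, v + j)) [0..<n]"

lemma cnot_layer_copy_layer: "u + n \<le> v \<or> v + n \<le> u \<Longrightarrow> cnot_layer (copy_layer u v n)"
  unfolding copy_layer_def by (rule cnot_layer_map) (auto simp: inj_on_def)

lemma cnots_copy_layer:
  assumes "u + n \<le> v \<or> v + n \<le> u"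
  shows "cnots (copy_layer u v n) x = x XOR push_bit v (take_bit n (drop_bit u x))"
proof (rule bit_eqI)
  fix q
  show "bit (cnots (copy_layer u v n) x) q = bit (x XOR push_bit v (take_bit n (drop_bit u x))) q"
  proof (cases "v \<le> q \<and> q < v + n")
    case True
    then have "(u + (q - v), q) \<in> set (copy_layer u v n)"
      by (auto simp: copy_layer_def image_iff intro!: bexI[where x = "q - v"])
    then show ?thesis
      using True bit_cnots_layer_target[OF cnot_layer_copy_layer[OF assms]]
      by (auto simp: bit_xor_iff bit_push_bit_iff bit_take_bit_iff bit_drop_bit_eq)
  next
    case False
    then have "q \<notin> snd ` set (copy_layer u v n)"
      by (auto simp: copy_layer_def)
    then show ?thesis
      using False by (auto simp: bit_cnots_nontarget bit_xor_iff bit_push_bit_iff bit_take_bit_iff)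
  qed
qed

section \<open>Parities\<close>

definition parity :: "nat set \<Rightarrow> (nat \<Rightarrow> bool) \<Rightarrow> bool" where
  "parity U p \<longleftrightarrow> odd (card {i \<in> U. p i})"

lemma parity_xor:
  assumes "finite U"
  shows "parity U (\<lambda>i. p i \<noteq> q i) \<longleftrightarrow> parity U p \<noteq> parity U q"
proof -
  define P where "P = {i \<in> U. p i}"
  define Q where "Q = {i \<in> U. q i}"
  have fin: "finite P" "finite Q" using assms by (simp_all add: P_def Q_def)
  have "{i \<in> U. p i \<noteq> q i} = (P - Q) \<union> (Q - P)" by (auto simp: P_def Q_def)
  moreover have "card ((P - Q) \<union> (Q - P)) = card (P - Q) + card (Q - P)"
    by (rule card_Un_disjoint) (use fin in auto)
  moreover have "card P = card (P \<inter> Q) + card (P - Q)" "card Q = card (Q \<inter> P) + card (Q - P)"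
    using fin by (simp_all only: card_Int_Diff)
  ultimately show ?thesis by (auto simp: parity_def P_def Q_def Int_commute)
qed

lemma parity_Un:
  assumes "finite A" "finite B" "A \<inter> B = {}"
  shows "parity (A \<union> B) p \<longleftrightarrow> parity A p \<noteq> parity B p"
proof -
  have "{i \<in> A \<union> B. p i} = {i \<in> A. p i} \<union> {i \<in> B. p i}" by auto
  then have "card {i \<in> A \<union> B. p i} = card {i \<in> A. p i} + card {i \<in> B. p i}"
    using assms by (simp add: card_Un_disjoint disjoint_iff)
  then show ?thesis by (simp add: parity_def)
qed

lemma parity_point: "parity U (\<lambda>i. i = c \<and> P) \<longleftrightarrow> c \<in> U \<and> P"
proof -
  have "{i \<in> U. i = c \<and> P} = (if c \<in> U \<and> P then {c} else {})" by auto
  then show ?thesis by (simp add: parity_def)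
qed

lemma parity_singleton: "parity {k} p \<longleftrightarrow> p k"
proof -
  have "{i \<in> {k}. p i} = (if p k then {k} else {})" by auto
  then show ?thesis by (simp add: parity_def)
qed

lemma parity_atLeastLessThan_split:
  "parity {k..<k + 2 * d} p \<longleftrightarrow> parity {k..<k + d} p \<noteq> parity {k + d..<k + d + d} p"
proof -
  have "{k..<k + 2 * d} = {k..<k + d} \<union> {k + d..<k + d + d}"
    by (simp add: ivl_disj_un_two(3) mult_2 add.assoc)
  then show ?thesis
    by (simp only: parity_Un[OF finite_atLeastLessThan finite_atLeastLessThan ivl_disj_int_two(3)])
qed

lemma cnots_linear:
  assumes "valid_cnot_circuit n gs"
  shows "\<exists>A. \<forall>x. \<forall>j < n. bit (cnots gs x) j = parity {..<n} (\<lambda>i. A j i \<and> bit x i)"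
  using assms
proof (induction gs)
  case Nil
  have "parity {..<n} (\<lambda>i. i = j \<and> bit x i) = bit x j" if "j < n" for x j
    using that parity_point[of "{..<n}" j "bit x j"] by (simp add: conj_commute cong: conj_cong)
  then show ?case by (intro exI[where x = "\<lambda>j i. i = j"]) auto
next
  case (Cons g gs)
  obtain c t where g: "g = (c, t)" by force
  have valid: "valid_cnot_circuit n gs" and ct: "c < n" "t < n"
    using Cons.prems by (auto simp: valid_cnot_circuit_def g)
  obtain A where A: "\<And>x j. j < n \<Longrightarrow> bit (cnots gs x) j = parity {..<n} (\<lambda>i. A j i \<and> bit x i)"
    using Cons.IH[OF valid] by blast
  define A' where "A' j i \<longleftrightarrow> A j i \<noteq> (i = c \<and> A j t)" for j i
  have "bit (cnots (g # gs) x) j = parity {..<n} (\<lambda>i. A' j i \<and> bit x i)" if "j < n" for x j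
  proof -
    have "bit (cnots (g # gs) x) j = parity {..<n} (\<lambda>i. (A j i \<and> bit x i) \<noteq> (i = t \<and> A j t \<and> bit x c))"
      using A[OF that] g by (auto intro!: arg_cong[where f = "parity _"])
    also have "\<dots> \<longleftrightarrow> parity {..<n} (\<lambda>i. A j i \<and> bit x i) \<noteq> (A j t \<and> bit x c)"
      using ct by (subst parity_xor) (simp_all add: parity_point)
    also have "\<dots> \<longleftrightarrow> parity {..<n} (\<lambda>i. (A j i \<and> bit x i) \<noteq> (i = c \<and> A j t \<and> bit x c))"
      using ct by (subst parity_xor) (simp_all add: parity_point)
    also have "\<dots> \<longleftrightarrow> parity {..<n} (\<lambda>i. A' j i \<and> bit x i)"
      by (auto simp: A'_def intro!: arg_cong[where f = "parity _"])
    finally show ?thesis .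
  qed
  then show ?case by blast
qed

section \<open>Permutation matrices\<close>

definition perm_mat :: "nat \<Rightarrow> (nat \<Rightarrow> nat) \<Rightarrow> complex mat" where
  "perm_mat N f = mat (2 ^ N) (2 ^ N) (\<lambda>(x, y). if x = f y then 1 else 0)"

lemma perm_mat_carrier [simp]: "perm_mat N f \<in> carrier_mat (2 ^ N) (2 ^ N)"
  and dim_row_perm_mat [simp]: "dim_row (perm_mat N f) = 2 ^ N"
  and dim_col_perm_mat [simp]: "dim_col (perm_mat N f) = 2 ^ N"
  by (simp_all add: perm_mat_def)

lemma index_perm_mat [simp]:
  "x < 2 ^ N \<Longrightarrow> y < 2 ^ N \<Longrightarrow> perm_mat N f $$ (x, y) = (if x = f y then 1 else 0)"
  by (simp add: perm_mat_def)

lemma perm_mat_ident: "perm_mat N (\<lambda>x. x) = 1\<^sub>m (2 ^ N)"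
  by (rule eq_matI) auto

lemma perm_mat_mult:
  assumes "\<And>y. y < 2 ^ N \<Longrightarrow> g y < 2 ^ N"
  shows "perm_mat N f * perm_mat N g = perm_mat N (f \<circ> g)"
proof (rule eq_matI)
  fix x y assume x: "x < dim_row (perm_mat N (f \<circ> g))" and y: "y < dim_col (perm_mat N (f \<circ> g))"
  have "(perm_mat N f * perm_mat N g) $$ (x, y)
      = (\<Sum>k = 0..<2 ^ N. perm_mat N f $$ (x, k) * perm_mat N g $$ (k, y))"
    using x y by (simp add: scalar_prod_def)
  also have "\<dots> = (\<Sum>k = 0..<2 ^ N. if k = g y then (if x = f k then 1 else 0) else 0)"
    using x y by (intro sum.cong) auto
  also have "\<dots> = (if x = f (g y) then 1 else 0)"
    using assms y by (simp add: sum.delta')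
  finally show "(perm_mat N f * perm_mat N g) $$ (x, y) = perm_mat N (f \<circ> g) $$ (x, y)"
    using x y by simp
qed auto

lemma unitary_perm_mat:
  assumes "\<And>x. x < 2 ^ N \<Longrightarrow> f x < 2 ^ N" "\<And>x. x < 2 ^ N \<Longrightarrow> g x < 2 ^ N"
    and "\<And>x. x < 2 ^ N \<Longrightarrow> f (g x) = x" "\<And>x. x < 2 ^ N \<Longrightarrow> g (f x) = x"
  shows "unitary_mat (2 ^ N) (perm_mat N f)"
proof -
  have "mat_adjoint (perm_mat N f) = perm_mat N g"
  proof (rule eq_matI)
    fix x y assume "x < dim_row (perm_mat N g)" "y < dim_col (perm_mat N g)"
    moreover from this have "y = f x \<longleftrightarrow> x = g y" using assms by auto
    ultimately show "mat_adjoint (perm_mat N f) $$ (x, y) = perm_mat N g $$ (x, y)"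
      by (simp add: mat_adjoint_def mat_of_rows_def)
  qed (simp_all add: mat_adjoint_def)
  moreover have "perm_mat N (f \<circ> g) = 1\<^sub>m (2 ^ N)" "perm_mat N (g \<circ> f) = 1\<^sub>m (2 ^ N)"
    using assms by (auto intro!: eq_matI)
  ultimately show ?thesis
    using assms by (simp add: unitary_mat_def perm_mat_mult)
qed

lemma embeds_perm_mat:
  assumes "\<And>x. x < 2 ^ n \<Longrightarrow> f x = g x" and "\<And>x. x < 2 ^ n \<Longrightarrow> g x < 2 ^ n"
  shows "embeds n m (perm_mat n g) (perm_mat (n + m) f)"
  unfolding embeds_def
proof (intro conjI ballI)
  fix \<psi> :: "complex vec" assume \<psi>: "\<psi> \<in> carrier_vec (2 ^ n)"
  have le: "(2::nat) ^ n \<le> 2 ^ (n + m)" by (simp add: power_increasing)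
  show "perm_mat (n + m) f *\<^sub>v ext_anc n m \<psi> = ext_anc n m (perm_mat n g *\<^sub>v \<psi>)"
  proof (rule eq_vecI)
    fix x assume "x < dim_vec (ext_anc n m (perm_mat n g *\<^sub>v \<psi>))"
    then have x: "x < 2 ^ (n + m)" by (simp add: ext_anc_def)
    have "(perm_mat (n + m) f *\<^sub>v ext_anc n m \<psi>) $ x
        = (\<Sum>y = 0..<2 ^ (n + m). (if x = f y then 1 else 0) * (if y < 2 ^ n then \<psi> $ y else 0))"
      using x by (simp add: scalar_prod_def ext_anc_def)
    also have "\<dots> = (\<Sum>y = 0..<2 ^ n. if x = g y then \<psi> $ y else 0)"
      using le assms(1) by (intro sum.mono_neutral_cong_right) auto
    also have "\<dots> = ext_anc n m (perm_mat n g *\<^sub>v \<psi>) $ x"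
    proof (cases "x < 2 ^ n")
      case True
      then show ?thesis
        using x \<psi> by (simp add: ext_anc_def scalar_prod_def; intro sum.cong; auto)
    next
      case False
      then have "(\<Sum>y = 0..<2 ^ n. if x = g y then \<psi> $ y else 0) = 0"
        using assms(2) by (intro sum.neutral) (metis atLeastLessThan_iff)
      then show ?thesis using False x by (simp add: ext_anc_def)
    qed
    finally show "(perm_mat (n + m) f *\<^sub>v ext_anc n m \<psi>) $ x = ext_anc n m (perm_mat n g *\<^sub>v \<psi>) $ x" .
  qed (simp add: ext_anc_def)
qed simp_all

lemma embed2_cnot_mat:
  assumes "c \<noteq> t"
  shows "embed2 N cnot_mat c t = perm_mat N (cnot_fun c t)"
proof (rule eq_matI)
  fix x y assume x: "x < dim_row (perm_mat N (cnot_fun c t))" and y: "y < dim_col (perm_mat N (cnot_fun c t))"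
  have index_lt: "2 * qbit z c + qbit z t < 4" for z by (simp add: qbit_eq_of_bool_bit)
  have cnot_index: "(2 * of_bool a' + of_bool b' = 2 * of_bool a + (of_bool a + of_bool b) mod (2::nat))
      \<longleftrightarrow> a' = a \<and> b' = (b \<noteq> a)" for a b a' b'
    by (cases a; cases b; cases a'; cases b') simp_all
  have "x = cnot_fun c t y \<longleftrightarrow> (\<forall>q. bit x q = bit (cnot_fun c t y) q)"
    by (simp add: bit_eq_iff)
  also have "\<dots> \<longleftrightarrow> agree_except {c, t} x y \<and> bit x c = bit y c \<and> bit x t = (bit y t \<noteq> bit y c)"
    using assms by (auto simp: agree_except_def qbit_eq_of_bool_bit)
  finally have "embed2 N cnot_mat c t $$ (x, y) = (if x = cnot_fun c t y then 1 else 0)"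
    using x y index_lt[of x] index_lt[of y]
    by (simp add: embed2_def cnot_mat_def qbit_eq_of_bool_bit cnot_index)
  then show "embed2 N cnot_mat c t $$ (x, y) = perm_mat N (cnot_fun c t) $$ (x, y)"
    using x y by simp
qed (auto simp: embed2_def)

lemma cnot_circuit_op_eq_perm_mat:
  "valid_cnot_circuit N gs \<Longrightarrow> cnot_circuit_op N gs = perm_mat N (cnots gs)"
proof (induction gs)
  case Nil
  then show ?case by (simp add: cnot_circuit_op_def perm_mat_ident)
next
  case (Cons g gs)
  obtain c t where g: "g = (c, t)" by force
  have "cnot_circuit_op N (g # gs) = cnot_circuit_op N gs * embed2 N cnot_mat c t"
    by (simp add: cnot_circuit_op_def g)
  also have "\<dots> = perm_mat N (cnots gs) * perm_mat N (cnot_fun c t)"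
    using Cons by (simp add: g embed2_cnot_mat)
  also have "\<dots> = perm_mat N (cnots (g # gs))"
    using Cons.prems by (simp add: g perm_mat_mult cnot_fun_less)
  finally show ?case .
qed

lemma unitary_cnot_circuit_op:
  assumes "valid_cnot_circuit n gs"
  shows "unitary_mat (2 ^ n) (cnot_circuit_op n gs)"
proof -
  have "cnots gs (cnots (rev gs) x) = x" for x
    using cnots_rev_cnots[of n "rev gs" x] assms by simp
  then show ?thesis
    unfolding cnot_circuit_op_eq_perm_mat[OF assms] using assms
    by (intro unitary_perm_mat[where g = "cnots (rev gs)"]) (auto simp: cnots_less cnots_rev_cnots)
qed

lemma cnot_mat_eq_perm_mat: "cnot_mat = perm_mat 2 (cnot_fun 1 0)"
proof (rule eq_matI)
  fix x y assume "x < dim_row (perm_mat 2 (cnot_fun 1 0))" "y < dim_col (perm_mat 2 (cnot_fun 1 0))"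
  then have "x \<in> {0, 1, 2, 3}" "y \<in> {0, 1, 2, 3}" by auto
  then show "cnot_mat $$ (x, y) = perm_mat 2 (cnot_fun 1 0) $$ (x, y)"
    by (auto simp: cnot_mat_def cnot_fun_def bit_0)
qed (auto simp: cnot_mat_def)

lemma unitary_cnot_mat: "unitary_mat 4 cnot_mat"
proof -
  have "unitary_mat (2 ^ 2) (perm_mat 2 (cnot_fun 1 0))"
    using cnot_fun_less[of 0 2] by (intro unitary_perm_mat[where g = "cnot_fun 1 0"]) (auto simp: cnot_fun_cnot_fun)
  then show ?thesis unfolding cnot_mat_eq_perm_mat by simp
qed

definition cnot_gates :: "(nat \<times> nat) list \<Rightarrow> gate list" where
  "cnot_gates L = map (\<lambda>(c, t). Gate2 cnot_mat c t) L"

lemma layer_op_cnot_gates: "layer_op N (cnot_gates L) = cnot_circuit_op N L"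
  by (induction L) (auto simp: layer_op_def cnot_circuit_op_def cnot_gates_def)

lemma valid_layer_cnot_gates:
  assumes "cnot_layer L" and "valid_cnot_circuit N L"
  shows "valid_layer N (cnot_gates L)"
  unfolding valid_layer_def
proof (intro conjI allI impI ballI)
  fix g assume "g \<in> set (cnot_gates L)"
  then show "valid_gate N g"
    using assms(2) by (auto simp: cnot_gates_def unitary_cnot_mat valid_cnot_circuit_def)
next
  fix i j assume "i < length (cnot_gates L)" "j < length (cnot_gates L)" "i \<noteq> j"
  then have "i < length L" "j < length L" "i \<noteq> j" by (simp_all add: cnot_gates_def)
  moreover have "distinct (map fst L)" "distinct (map snd L)"
    using assms(1) by (simp_all add: cnot_layer_def)
  moreover have "\<forall>p \<in> set L. \<forall>p' \<in> set L. fst p \<noteq> snd p'"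
    using assms(1) by (force simp: cnot_layer_def)
  ultimately have "fst (L ! i) \<noteq> fst (L ! j)" "snd (L ! i) \<noteq> snd (L ! j)"
    "fst (L ! i) \<noteq> snd (L ! j)" "snd (L ! i) \<noteq> fst (L ! j)"
    by (auto simp: distinct_conv_nth) (metis nth_mem)
  then show "gate_support (cnot_gates L ! i) \<inter> gate_support (cnot_gates L ! j) = {}"
    using \<open>i < length L\<close> \<open>j < length L\<close> by (auto simp: cnot_gates_def split: prod.splits)
qed

lemma circuit_op_cnot_gates:
  "valid_cnot_circuit N (concat Ls) \<Longrightarrow> circuit_op N (map cnot_gates Ls) = perm_mat N (cnots (concat Ls))"
proof (induction Ls)
  case Nil
  then show ?case by (simp add: circuit_op_def perm_mat_ident)
next
  case (Cons L Ls)
  have "circuit_op N (map cnot_gates (L # Ls)) = circuit_op N (map cnot_gates Ls) * layer_op N (cnot_gates L)"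
    by (simp add: circuit_op_def)
  also have "\<dots> = perm_mat N (cnots (concat Ls)) * perm_mat N (cnots L)"
    using Cons by (simp add: layer_op_cnot_gates cnot_circuit_op_eq_perm_mat)
  also have "\<dots> = perm_mat N (cnots (concat (L # Ls)))"
    using Cons.prems by (simp add: perm_mat_mult cnots_less)
  finally show ?case .
qed

lemma embeds_cnot_layers:
  assumes layers: "\<forall>L \<in> set Ls. cnot_layer L \<and> valid_cnot_circuit (n + m) L"
    and valid: "valid_cnot_circuit n gs"
    and agree: "\<And>x. x < 2 ^ n \<Longrightarrow> cnots (concat Ls) x = cnots gs x"
  shows "valid_circuit (n + m) (map cnot_gates Ls)"
    and "embeds n m (cnot_circuit_op n gs) (circuit_op (n + m) (map cnot_gates Ls))"
proof -
  show "valid_circuit (n + m) (map cnot_gates Ls)"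
    using layers by (auto simp: valid_circuit_def intro: valid_layer_cnot_gates)
  have "valid_cnot_circuit (n + m) (concat Ls)"
    using layers by (auto simp: valid_cnot_circuit_def)
  then show "embeds n m (cnot_circuit_op n gs) (circuit_op (n + m) (map cnot_gates Ls))"
    using valid by (simp add: circuit_op_cnot_gates cnot_circuit_op_eq_perm_mat embeds_perm_mat agree cnots_less)
qed

section \<open>A logarithmic-depth parity block\<close>

lemma cnots_stages:
  assumes "\<And>r y. r < l \<Longrightarrow> I r y \<Longrightarrow> I (Suc r) (cnots (f r) y)" and "I 0 y"
  shows "I l (cnots (concat (map f [0..<l])) y)"
  using assms by (induction l) auto

lemma mult_add_eq_mult_add_iff:
  assumes "(k::nat) < P" "k' < P"
  shows "i * P + k = i' * P + k' \<longleftrightarrow> i = i' \<and> k = k'"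
proof
  assume eq: "i * P + k = i' * P + k'"
  have "(i * P + k) div P = i" "(i * P + k) mod P = k"
    "(i' * P + k') div P = i'" "(i' * P + k') mod P = k'"
    using assms by auto
  then show "i = i' \<and> k = k'" using eq by metis
qed simp

lemma mult_add_less_mult:
  assumes "(k::nat) < P" "i < n"
  shows "i * P + k < n * P"
proof -
  have "i * P + k < Suc i * P" using assms(1) by simp
  also have "\<dots> \<le> n * P" using assms(2) by (intro mult_le_mono1) simp
  finally show ?thesis .
qed

lemma dvd_less_imp_add_le:
  assumes "(d::nat) dvd k" "d dvd P" "k < P"
  shows "k + d \<le> P"
proof -
  obtain a b where "k = d * a" "P = d * b" using assms(1,2) by (elim dvdE)
  moreover from this have "Suc a \<le> b" using assms(3) by simp
  ultimately show ?thesis by (metis mult_Suc_right mult_le_mono2 add.commute)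
qed

locale parity_block =
  fixes n K base :: nat and src tgt :: "nat \<Rightarrow> nat" and A :: "nat \<Rightarrow> nat \<Rightarrow> bool"
  assumes n_le: "n \<le> 2 ^ K"
    and inj_src: "inj_on src {..<n}" and inj_tgt: "inj_on tgt {..<n}"
    and src_less: "i < n \<Longrightarrow> src i < base" and tgt_less: "i < n \<Longrightarrow> tgt i < base"
    and src_ne_tgt: "i < n \<Longrightarrow> j < n \<Longrightarrow> src i \<noteq> tgt j"
begin

(* Ancillae start at wire base: copy_wire i k carries the k-th copy of input src i, and
   tree_wire k j is leaf k of the binary tree summing the parity for output tgt j. *)
definition copy_wire :: "nat \<Rightarrow> nat \<Rightarrow> nat" where
  "copy_wire i k = base + i * 2 ^ K + k"

definition tree_wire :: "nat \<Rightarrow> nat \<Rightarrow> nat" where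
  "tree_wire k j = base + n * 2 ^ K + j * 2 ^ K + k"

abbreviation width :: nat where
  "width \<equiv> base + 2 * n * 2 ^ K"

lemma copy_wire_eq_iff:
  "k < 2 ^ K \<Longrightarrow> k' < 2 ^ K \<Longrightarrow> copy_wire i k = copy_wire i' k' \<longleftrightarrow> i = i' \<and> k = k'"
  by (simp add: copy_wire_def mult_add_eq_mult_add_iff flip: add.assoc)

lemma tree_wire_eq_iff:
  "k < 2 ^ K \<Longrightarrow> k' < 2 ^ K \<Longrightarrow> tree_wire k j = tree_wire k' j' \<longleftrightarrow> k = k' \<and> j = j'"
  by (auto simp: tree_wire_def mult_add_eq_mult_add_iff add.assoc)

lemma base_le_copy_wire [simp]: "base \<le> copy_wire i k"
  and base_le_tree_wire [simp]: "base \<le> tree_wire k j"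
  by (simp_all add: copy_wire_def tree_wire_def)

lemma copy_wire_ne_tree_wire: "i < n \<Longrightarrow> k < 2 ^ K \<Longrightarrow> copy_wire i k \<noteq> tree_wire k' j"
  using mult_add_less_mult[of k "2 ^ K" i n] by (simp add: copy_wire_def tree_wire_def)

lemma tree_wire_ne_tgt: "j < n \<Longrightarrow> tree_wire k j' \<noteq> tgt j"
  using tgt_less[of j] by (simp add: tree_wire_def)

lemma copy_wire_less: "i < n \<Longrightarrow> k < 2 ^ K \<Longrightarrow> copy_wire i k < width"
  using mult_add_less_mult[of k "2 ^ K" i n] by (simp add: copy_wire_def)

lemma tree_wire_less: "k < 2 ^ K \<Longrightarrow> j < n \<Longrightarrow> tree_wire k j < width"
  using mult_add_less_mult[of k "2 ^ K" j n] by (simp add: tree_wire_def)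

definition work_wires :: "nat set" where
  "work_wires = src ` {..<n} \<union> {base..<width}"

lemma work_wires_less: "q \<in> work_wires \<Longrightarrow> q < width"
  by (auto simp: work_wires_def intro: less_le_trans[OF src_less])

lemma tgt_notin_work_wires:
  assumes "j < n"
  shows "tgt j \<notin> work_wires"
proof
  assume "tgt j \<in> work_wires"
  then consider i where "i < n" "src i = tgt j" | "base \<le> tgt j"
    by (auto simp: work_wires_def)
  then show False
    using assms src_ne_tgt tgt_less[OF assms] by cases auto
qed

lemma src_in_work_wires: "i < n \<Longrightarrow> src i \<in> work_wires"
  by (simp add: work_wires_def)

lemma copy_wire_in_work_wires: "i < n \<Longrightarrow> k < 2 ^ K \<Longrightarrow> copy_wire i k \<in> work_wires"
  using copy_wire_less[of i k] by (simp add: work_wires_def)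

lemma tree_wire_in_work_wires: "k < 2 ^ K \<Longrightarrow> j < n \<Longrightarrow> tree_wire k j \<in> work_wires"
  using tree_wire_less[of k j] by (simp add: work_wires_def)

definition load_layer :: "(nat \<times> nat) list" where
  "load_layer = map (\<lambda>i. (src i, copy_wire i 0)) [0..<n]"

definition fanout_layer :: "nat \<Rightarrow> (nat \<times> nat) list" where
  "fanout_layer r = map (\<lambda>(i, k). (copy_wire i k, copy_wire i (k + 2 ^ r))) (List.product [0..<n] [0..<2 ^ r])"

definition gather_layer :: "(nat \<times> nat) list" where
  "gather_layer = map (\<lambda>(i, j). (copy_wire i j, tree_wire i j))
     (filter (\<lambda>(i, j). A j i) (List.product [0..<n] [0..<n]))"

definition sum_layer :: "nat \<Rightarrow> (nat \<times> nat) list" where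
  "sum_layer r = map (\<lambda>(k, j). (tree_wire (k + 2 ^ r) j, tree_wire k j))
     (List.product (filter (\<lambda>k. 2 ^ Suc r dvd k) [0..<2 ^ K]) [0..<n])"

definition output_layer :: "(nat \<times> nat) list" where
  "output_layer = map (\<lambda>j. (tree_wire 0 j, tgt j)) [0..<n]"

definition forward_layers :: "(nat \<times> nat) list list" where
  "forward_layers = load_layer # map fanout_layer [0..<K] @ gather_layer # map sum_layer [0..<K]"

definition layers :: "(nat \<times> nat) list list" where
  "layers = forward_layers @ output_layer # map rev (rev forward_layers)"

lemma length_layers: "length layers = 4 * K + 5"
  by (simp add: layers_def forward_layers_def)

lemma cnot_layer_load_layer: "cnot_layer load_layer"
  unfolding load_layer_def
proof (rule cnot_layer_map)
  show "inj_on (snd \<circ> (\<lambda>i. (src i, copy_wire i 0))) (set [0..<n])"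
    by (auto simp: inj_on_def copy_wire_eq_iff)
  show "fst (src u, copy_wire u 0) \<noteq> snd (src v, copy_wire v 0)" if "u \<in> set [0..<n]" "v \<in> set [0..<n]" for u v
    using that src_less[of u] by (simp add: copy_wire_def)
qed (use inj_src in \<open>auto simp: comp_def lessThan_atLeast0\<close>)

lemma load_layer_wires: "set load_layer \<subseteq> work_wires \<times> work_wires"
  by (auto simp: load_layer_def src_in_work_wires copy_wire_in_work_wires)

lemma fanout_layer_indices:
  assumes "r < K" "(k::nat) < 2 ^ r"
  shows "k < 2 ^ K" "k + 2 ^ r < 2 ^ K"
proof -
  have "(2::nat) ^ Suc r \<le> 2 ^ K" using assms(1) by (intro power_increasing) auto
  then show "k + 2 ^ r < 2 ^ K" using assms(2) by simp
  then show "k < 2 ^ K" by simp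
qed

lemma cnot_layer_fanout_layer: "r < K \<Longrightarrow> cnot_layer (fanout_layer r)"
  unfolding fanout_layer_def
  by (rule cnot_layer_map) (auto simp: inj_on_def distinct_product copy_wire_eq_iff fanout_layer_indices)

lemma fanout_layer_wires: "r < K \<Longrightarrow> set (fanout_layer r) \<subseteq> work_wires \<times> work_wires"
  by (auto simp: fanout_layer_def copy_wire_in_work_wires fanout_layer_indices)

lemma less_n_imp_less_power: "i < n \<Longrightarrow> i < 2 ^ K"
  using n_le by simp

lemma cnot_layer_gather_layer: "cnot_layer gather_layer"
  unfolding gather_layer_def
proof (rule cnot_layer_map)
  show "fst (case u of (i, j) \<Rightarrow> (copy_wire i j, tree_wire i j))
      \<noteq> snd (case v of (i, j) \<Rightarrow> (copy_wire i j, tree_wire i j))"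
    if "u \<in> set (filter (\<lambda>(i, j). A j i) (List.product [0..<n] [0..<n]))"
      and "v \<in> set (filter (\<lambda>(i, j). A j i) (List.product [0..<n] [0..<n]))" for u v
    using that copy_wire_ne_tree_wire less_n_imp_less_power by (auto split: prod.splits)
qed (auto simp: inj_on_def distinct_product copy_wire_eq_iff tree_wire_eq_iff less_n_imp_less_power)

lemma gather_layer_wires: "set gather_layer \<subseteq> work_wires \<times> work_wires"
  by (auto simp: gather_layer_def copy_wire_in_work_wires tree_wire_in_work_wires less_n_imp_less_power)

lemma sum_layer_indices:
  assumes "r < K" "2 ^ Suc r dvd k" "(k::nat) < 2 ^ K"
  shows "k < 2 ^ K" "k + 2 ^ r < 2 ^ K"
proof -
  have "k + 2 ^ Suc r \<le> 2 ^ K"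
    using assms by (intro dvd_less_imp_add_le le_imp_power_dvd) auto
  moreover have "(2::nat) ^ Suc r = 2 ^ r + 2 ^ r" "(0::nat) < 2 ^ r" by simp_all
  ultimately show "k + 2 ^ r < 2 ^ K" by linarith
qed (fact assms(3))

lemma add_power_ne_multiple:
  assumes "2 ^ Suc r dvd k" "2 ^ Suc r dvd k'"
  shows "k + 2 ^ r \<noteq> (k'::nat)"
proof
  assume "k + 2 ^ r = k'"
  then have "2 ^ Suc r dvd (2::nat) ^ r"
    using assms by (metis dvd_add_right_iff)
  then show False
    using nat_dvd_not_less[of "2 ^ r" "2 ^ Suc r"] by simp
qed

lemma cnot_layer_sum_layer: "r < K \<Longrightarrow> cnot_layer (sum_layer r)"
  unfolding sum_layer_def
  by (rule cnot_layer_map) (auto simp: inj_on_def distinct_product tree_wire_eq_iff sum_layer_indices add_power_ne_multiple)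

lemma sum_layer_wires: "r < K \<Longrightarrow> set (sum_layer r) \<subseteq> work_wires \<times> work_wires"
  by (auto simp: sum_layer_def tree_wire_in_work_wires sum_layer_indices)

lemma cnot_layer_output_layer: "cnot_layer output_layer"
  unfolding output_layer_def
proof (rule cnot_layer_map)
  show "fst (tree_wire 0 u, tgt u) \<noteq> snd (tree_wire 0 v, tgt v)" if "u \<in> set [0..<n]" "v \<in> set [0..<n]" for u v
    using that tree_wire_ne_tgt by simp
qed (use inj_tgt in \<open>auto simp: inj_on_def tree_wire_eq_iff lessThan_atLeast0\<close>)

lemma forward_layer_valid:
  assumes "L \<in> set forward_layers"
  shows "cnot_layer L \<and> set L \<subseteq> work_wires \<times> work_wires"
proof -
  consider "L = load_layer" | r where "r < K" "L = fanout_layer r" | "L = gather_layer"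
    | r where "r < K" "L = sum_layer r"
    using assms by (auto simp: forward_layers_def)
  then show ?thesis
    by cases (simp_all add: cnot_layer_load_layer load_layer_wires cnot_layer_fanout_layer
      fanout_layer_wires cnot_layer_gather_layer gather_layer_wires cnot_layer_sum_layer sum_layer_wires)
qed

lemma valid_cnot_circuit_work_wires:
  assumes "cnot_layer L" "set L \<subseteq> work_wires \<times> work_wires"
  shows "valid_cnot_circuit width L"
proof -
  have "c < width \<and> t < width \<and> c \<noteq> t" if "(c, t) \<in> set L" for c t
    using assms(2) that cnot_layer_ne[OF assms(1) that] work_wires_less by blast
  then show ?thesis by (auto simp: valid_cnot_circuit_def)
qed

lemma valid_cnot_circuit_output_layer: "valid_cnot_circuit width output_layer"
proof -
  have "c < width \<and> t < width \<and> c \<noteq> t" if ct: "(c, t) \<in> set output_layer" for c t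
  proof -
    obtain j where "j < n" "c = tree_wire 0 j" "t = tgt j"
      using ct by (auto simp: output_layer_def)
    then show ?thesis using tgt_less[of j] tree_wire_less[of 0 j] tree_wire_ne_tgt[of j 0 j] by auto
  qed
  then show ?thesis by (auto simp: valid_cnot_circuit_def)
qed

lemma layers_valid: "L \<in> set layers \<Longrightarrow> cnot_layer L \<and> valid_cnot_circuit width L"
  using forward_layer_valid valid_cnot_circuit_work_wires cnot_layer_output_layer
    valid_cnot_circuit_output_layer
  by (auto simp: layers_def)

definition fanout_inv :: "nat \<Rightarrow> nat \<Rightarrow> nat \<Rightarrow> bool" where
  "fanout_inv l x y \<longleftrightarrow>
     (\<forall>i < n. \<forall>k < 2 ^ K. bit y (copy_wire i k) \<longleftrightarrow> k < 2 ^ l \<and> bit x (src i))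
     \<and> (\<forall>k < 2 ^ K. \<forall>j < n. \<not> bit y (tree_wire k j))"

definition tree_inv :: "nat \<Rightarrow> nat \<Rightarrow> nat \<Rightarrow> bool" where
  "tree_inv l x y \<longleftrightarrow> (\<forall>k < 2 ^ K. \<forall>j < n. 2 ^ l dvd k \<longrightarrow>
     (bit y (tree_wire k j) \<longleftrightarrow> parity {k..<k + 2 ^ l} (\<lambda>i. i < n \<and> A j i \<and> bit x (src i))))"

lemma fanout_inv_load_layer:
  assumes "x < 2 ^ base"
  shows "fanout_inv 0 x (cnots load_layer x)"
  unfolding fanout_inv_def
proof (intro conjI allI impI)
  fix i k :: nat assume i: "i < n" and k: "k < 2 ^ K"
  note zero = not_bit_if_less_power[OF assms]
  show "bit (cnots load_layer x) (copy_wire i k) \<longleftrightarrow> k < 2 ^ 0 \<and> bit x (src i)"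
  proof (cases "k = 0")
    case True
    have "(src i, copy_wire i 0) \<in> set load_layer" using i by (simp add: load_layer_def)
    then show ?thesis
      using True bit_cnots_layer_target[OF cnot_layer_load_layer] zero i by simp
  next
    case False
    then have "copy_wire i k \<notin> snd ` set load_layer"
      using i k by (auto simp: load_layer_def copy_wire_eq_iff)
    then show ?thesis
      using False bit_cnots_nontarget zero by simp
  qed
next
  fix k j :: nat assume k: "k < 2 ^ K" and j: "j < n"
  have "tree_wire k j \<notin> snd ` set load_layer"
  proof
    assume "tree_wire k j \<in> snd ` set load_layer"
    then obtain i where "i < n" "tree_wire k j = copy_wire i 0"
      by (auto simp: load_layer_def)
    then show False using copy_wire_ne_tree_wire[of i 0 k j] by simp
  qed
  then show "\<not> bit (cnots load_layer x) (tree_wire k j)"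
    using bit_cnots_nontarget not_bit_if_less_power[OF assms] by simp
qed

lemma fanout_layer_targets:
  "q \<in> snd ` set (fanout_layer r) \<longleftrightarrow> (\<exists>i < n. \<exists>k < 2 ^ r. q = copy_wire i (k + 2 ^ r))"
proof
  assume "q \<in> snd ` set (fanout_layer r)"
  then show "\<exists>i < n. \<exists>k < 2 ^ r. q = copy_wire i (k + 2 ^ r)"
    by (auto simp: fanout_layer_def) blast
next
  assume "\<exists>i < n. \<exists>k < 2 ^ r. q = copy_wire i (k + 2 ^ r)"
  then obtain i k where "i < n" "k < 2 ^ r" "q = copy_wire i (k + 2 ^ r)" by blast
  then have "(copy_wire i k, q) \<in> set (fanout_layer r)"
    by (auto simp: fanout_layer_def)
  then show "q \<in> snd ` set (fanout_layer r)"
    by (metis snd_conv image_eqI)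
qed

lemma tree_wire_notin_fanout_targets:
  assumes "r < K" "k < 2 ^ K" "j < n"
  shows "tree_wire k j \<notin> snd ` set (fanout_layer r)"
proof
  assume "tree_wire k j \<in> snd ` set (fanout_layer r)"
  then obtain i k' where "i < n" "k' < 2 ^ r" "tree_wire k j = copy_wire i (k' + 2 ^ r)"
    by (auto simp only: fanout_layer_targets)
  then show False
    using copy_wire_ne_tree_wire[of i "k' + 2 ^ r" k j] fanout_layer_indices[OF assms(1)] by simp
qed

lemma bit_cnots_fanout_layer_copy_wire:
  assumes r: "r < K" and i: "i < n" and k: "k < 2 ^ K"
  shows "bit (cnots (fanout_layer r) y) (copy_wire i k) \<longleftrightarrow>
    (if 2 ^ r \<le> k \<and> k < 2 ^ Suc r then bit y (copy_wire i k) \<noteq> bit y (copy_wire i (k - 2 ^ r))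
     else bit y (copy_wire i k))"
proof (cases "2 ^ r \<le> k \<and> k < 2 ^ Suc r")
  case True
  define k' where "k' = k - 2 ^ r"
  have "(2::nat) ^ Suc r = 2 ^ r + 2 ^ r" by simp
  then have k': "k' < 2 ^ r" "k = k' + 2 ^ r"
    using True unfolding k'_def by linarith+
  then have "(i, k') \<in> set (List.product [0..<n] [0..<2 ^ r])"
    using i by simp
  then have "(\<lambda>(i, k). (copy_wire i k, copy_wire i (k + 2 ^ r))) (i, k') \<in> set (fanout_layer r)"
    unfolding fanout_layer_def set_map by (rule imageI)
  then have "bit (cnots (fanout_layer r) y) (copy_wire i k) \<longleftrightarrow> bit y (copy_wire i k) \<noteq> bit y (copy_wire i k')"
    using bit_cnots_layer_target[OF cnot_layer_fanout_layer[OF r]] by (simp add: k'(2))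
  then show ?thesis
    using True by (simp add: k'_def)
next
  case False
  have "copy_wire i k \<noteq> copy_wire i' (k' + 2 ^ r)" if k': "k' < 2 ^ r" for i' k'
  proof
    assume "copy_wire i k = copy_wire i' (k' + 2 ^ r)"
    then have "k = k' + 2 ^ r"
      using k fanout_layer_indices[OF r k'] copy_wire_eq_iff by blast
    then show False using False k' by simp
  qed
  then have "copy_wire i k \<notin> snd ` set (fanout_layer r)"
    unfolding fanout_layer_targets by blast
  then show ?thesis
    using False by (auto simp: bit_cnots_nontarget)
qed

lemma fanout_inv_fanout_layer:
  assumes r: "r < K" and inv: "fanout_inv r x y"
  shows "fanout_inv (Suc r) x (cnots (fanout_layer r) y)"
  unfolding fanout_inv_def
proof (intro conjI allI impI)
  fix i k :: nat assume i: "i < n" and k: "k < 2 ^ K"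
  have copies: "bit y (copy_wire i k') \<longleftrightarrow> k' < 2 ^ r \<and> bit x (src i)" if "k' < 2 ^ K" for k'
    using inv i that by (simp add: fanout_inv_def)
  show "bit (cnots (fanout_layer r) y) (copy_wire i k) \<longleftrightarrow> k < 2 ^ Suc r \<and> bit x (src i)"
    using bit_cnots_fanout_layer_copy_wire[OF r i k] k by (auto simp: copies)
next
  fix k j :: nat assume k: "k < 2 ^ K" and j: "j < n"
  have "tree_wire k j \<notin> snd ` set (fanout_layer r)"
    using r k j by (rule tree_wire_notin_fanout_targets)
  then have "bit (cnots (fanout_layer r) y) (tree_wire k j) \<longleftrightarrow> bit y (tree_wire k j)"
    by (rule bit_cnots_nontarget)
  moreover have "\<not> bit y (tree_wire k j)"
    using inv k j by (simp add: fanout_inv_def)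
  ultimately show "\<not> bit (cnots (fanout_layer r) y) (tree_wire k j)"
    by simp
qed

lemma gather_layer_targets:
  "q \<in> snd ` set gather_layer \<longleftrightarrow> (\<exists>i < n. \<exists>j < n. A j i \<and> q = tree_wire i j)"
  by (auto simp: gather_layer_def image_iff)

lemma tree_inv_gather_layer:
  assumes inv: "fanout_inv K x y"
  shows "tree_inv 0 x (cnots gather_layer y)"
  unfolding tree_inv_def
proof (intro allI impI)
  fix k j :: nat assume k: "k < 2 ^ K" and j: "j < n"
  have "{k..<k + 2 ^ 0} = {k}" by auto
  then have "parity {k..<k + 2 ^ 0} (\<lambda>i. i < n \<and> A j i \<and> bit x (src i)) \<longleftrightarrow> k < n \<and> A j k \<and> bit x (src k)"
    by (simp add: parity_singleton)
  moreover have "bit (cnots gather_layer y) (tree_wire k j) \<longleftrightarrow> k < n \<and> A j k \<and> bit x (src k)"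
  proof (cases "k < n \<and> A j k")
    case True
    then have "(copy_wire k j, tree_wire k j) \<in> set gather_layer"
      using j by (auto simp: gather_layer_def)
    then show ?thesis
      using True inv j k bit_cnots_layer_target[OF cnot_layer_gather_layer] less_n_imp_less_power
      by (simp add: fanout_inv_def)
  next
    case False
    have "tree_wire k j \<noteq> tree_wire i j'" if "i < n" "j' < n" "A j' i" for i j'
      using False k j that tree_wire_eq_iff[OF k less_n_imp_less_power[OF that(1)]] by auto
    then have "tree_wire k j \<notin> snd ` set gather_layer"
      by (auto simp only: gather_layer_targets)
    then have "bit (cnots gather_layer y) (tree_wire k j) \<longleftrightarrow> bit y (tree_wire k j)"
      by (rule bit_cnots_nontarget)
    moreover have "\<not> bit y (tree_wire k j)"
      using inv j k by (simp add: fanout_inv_def)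
    ultimately show ?thesis
      using False by auto
  qed
  ultimately show "bit (cnots gather_layer y) (tree_wire k j)
      \<longleftrightarrow> parity {k..<k + 2 ^ 0} (\<lambda>i. i < n \<and> A j i \<and> bit x (src i))"
    by simp
qed

lemma tree_inv_sum_layer:
  assumes r: "r < K" and inv: "tree_inv r x y"
  shows "tree_inv (Suc r) x (cnots (sum_layer r) y)"
  unfolding tree_inv_def
proof (intro allI impI)
  fix k j :: nat assume k: "k < 2 ^ K" and j: "j < n" and dvd: "2 ^ Suc r dvd k"
  have "(tree_wire (k + 2 ^ r) j, tree_wire k j) \<in> set (sum_layer r)"
    using k j dvd by (auto simp: sum_layer_def)
  then have "bit (cnots (sum_layer r) y) (tree_wire k j)
      \<longleftrightarrow> bit y (tree_wire k j) \<noteq> bit y (tree_wire (k + 2 ^ r) j)"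
    by (rule bit_cnots_layer_target[OF cnot_layer_sum_layer[OF r]])
  moreover have "2 ^ r dvd k" "2 ^ r dvd k + 2 ^ r"
    using dvd by (auto intro: dvd_trans[OF le_imp_power_dvd[of r "Suc r"]])
  ultimately show "bit (cnots (sum_layer r) y) (tree_wire k j)
      \<longleftrightarrow> parity {k..<k + 2 ^ Suc r} (\<lambda>i. i < n \<and> A j i \<and> bit x (src i))"
    using inv k j sum_layer_indices[OF r dvd k]
    by (simp add: tree_inv_def parity_atLeastLessThan_split)
qed

lemma forward_layers_tree_root:
  assumes x: "x < 2 ^ base" and j: "j < n"
  shows "bit (cnots (concat forward_layers) x) (tree_wire 0 j) \<longleftrightarrow> parity {..<n} (\<lambda>i. A j i \<and> bit x (src i))"
proof -
  define y where "y = cnots (concat (map fanout_layer [0..<K])) (cnots load_layer x)"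
  have "fanout_inv K x y"
    unfolding y_def using fanout_inv_load_layer[OF x] fanout_inv_fanout_layer
    by (intro cnots_stages[where I = "\<lambda>r. fanout_inv r x"]) auto
  then have "tree_inv K x (cnots (concat (map sum_layer [0..<K])) (cnots gather_layer y))"
    using tree_inv_gather_layer
    by (intro cnots_stages[where I = "\<lambda>r. tree_inv r x"]) (auto intro: tree_inv_sum_layer)
  moreover have "{i \<in> {0..<0 + 2 ^ K}. i < n \<and> A j i \<and> bit x (src i)} = {i \<in> {..<n}. A j i \<and> bit x (src i)}"
    using n_le by auto
  ultimately show ?thesis
    using j by (simp add: forward_layers_def y_def tree_inv_def parity_def)
qed

lemma bit_cnots_layers:
  assumes x: "x < 2 ^ base"
  shows "bit (cnots (concat layers) x) q
    \<longleftrightarrow> bit x q \<noteq> (\<exists>j < n. q = tgt j \<and> parity {..<n} (\<lambda>i. A j i \<and> bit x (src i)))"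
proof -
  define G where "G = concat forward_layers"
  define y where "y = cnots G x"
  have "valid_cnot_circuit width G"
    using forward_layer_valid valid_cnot_circuit_work_wires by (simp add: G_def)
  moreover have "c \<in> work_wires" if "(c, t) \<in> set G" for c t
    using that forward_layer_valid unfolding G_def set_concat by blast
  then have "\<forall>(c, t) \<in> set output_layer. t \<notin> fst ` set G"
    using tgt_notin_work_wires by (fastforce simp: output_layer_def)
  ultimately have "cnots (concat layers) x = x XOR (cnots output_layer y XOR y)"
    using cnots_conjugate by (simp add: layers_def G_def y_def rev_concat[symmetric])
  moreover have "bit (cnots output_layer y) q \<noteq> bit y q
      \<longleftrightarrow> (\<exists>j < n. q = tgt j \<and> parity {..<n} (\<lambda>i. A j i \<and> bit x (src i)))"
  proof (cases "q \<in> tgt ` {..<n}")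
    case True
    then obtain j where j: "j < n" "q = tgt j" by blast
    then have "(tree_wire 0 j, q) \<in> set output_layer" by (simp add: output_layer_def)
    then have "bit (cnots output_layer y) q \<noteq> bit y q \<longleftrightarrow> bit y (tree_wire 0 j)"
      using bit_cnots_layer_target[OF cnot_layer_output_layer] by auto
    also have "\<dots> \<longleftrightarrow> parity {..<n} (\<lambda>i. A j i \<and> bit x (src i))"
      unfolding y_def G_def by (rule forward_layers_tree_root[OF x j(1)])
    also have "\<dots> \<longleftrightarrow> (\<exists>j' < n. q = tgt j' \<and> parity {..<n} (\<lambda>i. A j' i \<and> bit x (src i)))"
      using j inj_tgt by (auto simp: inj_on_def)
    finally show ?thesis .
  next
    case False
    then have "q \<notin> snd ` set output_layer" by (auto simp: output_layer_def)
    then show ?thesis using False bit_cnots_nontarget by auto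
  qed
  ultimately show ?thesis by (simp add: bit_xor_iff)
qed

end

section \<open>Logarithmic-depth CNOT circuits\<close>

lemma parity_block_registers:
  assumes "n \<le> 2 ^ K"
  shows "parity_block n K (2 * n) (\<lambda>i. i) ((+) n)"
    and "parity_block n K (2 * n) ((+) n) (\<lambda>i. i)"
  using assms by (unfold_locales; auto simp: inj_on_def)+

lemma cnots_layers_copy_up:
  assumes "n \<le> 2 ^ K" "x < 2 ^ n" "y < 2 ^ n"
    and y: "\<And>j. j < n \<Longrightarrow> bit y j = parity {..<n} (\<lambda>i. A j i \<and> bit x i)"
  shows "cnots (concat (parity_block.layers n K (2 * n) (\<lambda>i. i) ((+) n) A)) x = x XOR push_bit n y"
proof (rule bit_eqI)
  fix q
  have x: "x < 2 ^ (2 * n)"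
    by (rule less_le_trans[OF assms(2)]) (simp add: power_increasing)
  have "bit (cnots (concat (parity_block.layers n K (2 * n) (\<lambda>i. i) ((+) n) A)) x) q
      \<longleftrightarrow> bit x q \<noteq> (\<exists>j < n. q = n + j \<and> parity {..<n} (\<lambda>i. A j i \<and> bit x i))"
    by (rule parity_block.bit_cnots_layers[OF parity_block_registers(1)[OF assms(1)] x])
  also have "(\<exists>j < n. q = n + j \<and> parity {..<n} (\<lambda>i. A j i \<and> bit x i)) \<longleftrightarrow> n \<le> q \<and> bit y (q - n)"
    using y assms(3) by (auto simp: less_power_iff_bits intro!: exI[where x = "q - n"])
  finally show "bit (cnots (concat (parity_block.layers n K (2 * n) (\<lambda>i. i) ((+) n) A)) x) q
      \<longleftrightarrow> bit (x XOR push_bit n y) q"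
    by (simp add: bit_xor_iff bit_push_bit_iff)
qed

lemma cnots_layers_clear_down:
  assumes "n \<le> 2 ^ K" "x < 2 ^ n" "y < 2 ^ n"
    and x: "\<And>j. j < n \<Longrightarrow> bit x j = parity {..<n} (\<lambda>i. B j i \<and> bit y i)"
  shows "cnots (concat (parity_block.layers n K (2 * n) ((+) n) (\<lambda>i. i) B)) (x XOR push_bit n y) = push_bit n y"
proof (rule bit_eqI)
  fix q
  have xy: "x XOR push_bit n y < 2 ^ (2 * n)"
    using assms(2,3) by (auto simp: less_power_iff_bits bit_xor_iff bit_push_bit_iff)
  have "bit (x XOR push_bit n y) (n + i) \<longleftrightarrow> bit y i" for i
    using not_bit_if_less_power[OF assms(2)] by (simp add: bit_xor_iff bit_push_bit_iff)
  then have "(\<exists>j < n. q = j \<and> parity {..<n} (\<lambda>i. B j i \<and> bit (x XOR push_bit n y) (n + i))) \<longleftrightarrow> bit x q"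
    using x assms(2) by (auto simp: less_power_iff_bits)
  then show "bit (cnots (concat (parity_block.layers n K (2 * n) ((+) n) (\<lambda>i. i) B)) (x XOR push_bit n y)) q
      \<longleftrightarrow> bit (push_bit n y) q"
    using parity_block.bit_cnots_layers[OF parity_block_registers(2)[OF assms(1)] xy]
    by (auto simp: bit_xor_iff)
qed

lemma cnots_copy_layers_down_up:
  assumes "y < 2 ^ n"
  shows "cnots (copy_layer n 0 n @ copy_layer 0 n n) (push_bit n y) = y"
proof -
  have "take_bit n y = y" using assms by (simp add: take_bit_nat_eq_self_iff)
  then have "cnots (copy_layer n 0 n @ copy_layer 0 n n) (push_bit n y) = (push_bit n y XOR y) XOR push_bit n y"
    by (simp add: cnots_copy_layer drop_bit_push_bit take_bit_push_bit)
  then show ?thesis by (auto intro: bit_eqI simp: bit_xor_iff)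
qed

(* Wires 0..<n carry the input, n..<2n a second register, and both parity blocks use the
   ancillae from wire 2n on. *)
lemma cnot_circuit_log_depth:
  assumes valid: "valid_cnot_circuit n gs" and n_le: "n \<le> 2 ^ K"
  obtains Ls where "\<forall>L \<in> set Ls. cnot_layer L \<and> valid_cnot_circuit (2 * n + 2 * n * 2 ^ K) L"
    and "length Ls = 8 * K + 12"
    and "\<And>x. x < 2 ^ n \<Longrightarrow> cnots (concat Ls) x = cnots gs x"
proof -
  obtain A where A: "\<And>x j. j < n \<Longrightarrow> bit (cnots gs x) j = parity {..<n} (\<lambda>i. A j i \<and> bit x i)"
    using cnots_linear[OF valid] by blast
  obtain B where B: "\<And>y j. j < n \<Longrightarrow> bit (cnots (rev gs) y) j = parity {..<n} (\<lambda>i. B j i \<and> bit y i)"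
    using cnots_linear[of n "rev gs"] valid by auto
  interpret up: parity_block n K "2 * n" "\<lambda>i. i" "(+) n" A
    by (rule parity_block_registers(1)[OF n_le])
  interpret down: parity_block n K "2 * n" "(+) n" "\<lambda>i. i" B
    by (rule parity_block_registers(2)[OF n_le])
  define Ls where "Ls = up.layers @ down.layers @ [copy_layer n 0 n, copy_layer 0 n n]"
  have "valid_cnot_circuit (2 * n + 2 * n * 2 ^ K) (copy_layer u v n)"
    if "u \<le> n" "v \<le> n" "u + n \<le> v \<or> v + n \<le> u" for u v
    using that by (auto simp: copy_layer_def valid_cnot_circuit_def)
  then have "\<forall>L \<in> set Ls. cnot_layer L \<and> valid_cnot_circuit (2 * n + 2 * n * 2 ^ K) L"
    using up.layers_valid down.layers_valid by (auto simp: Ls_def cnot_layer_copy_layer)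
  moreover have "length Ls = 8 * K + 12"
    by (simp add: Ls_def up.length_layers down.length_layers)
  moreover have "cnots (concat Ls) x = cnots gs x" if x: "x < 2 ^ n" for x
  proof -
    define y where "y = cnots gs x"
    have y: "y < 2 ^ n" using cnots_less[OF valid x] by (simp add: y_def)
    have "cnots (concat up.layers) x = x XOR push_bit n y"
      using A by (intro cnots_layers_copy_up[OF n_le x y]) (simp add: y_def)
    moreover have "bit x j = parity {..<n} (\<lambda>i. B j i \<and> bit y i)" if "j < n" for j
      using B[OF that, of y] cnots_rev_cnots[OF valid] by (simp add: y_def)
    then have "cnots (concat down.layers) (x XOR push_bit n y) = push_bit n y"
      by (rule cnots_layers_clear_down[OF n_le x y])
    ultimately show ?thesis
      using cnots_copy_layers_down_up[OF y] by (simp add: Ls_def y_def)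
  qed
  ultimately show ?thesis by (rule that)
qed

lemma depth_and_ancilla_bounds:
  assumes "2 \<le> n"
  defines "K \<equiv> Suc (floor_log n)"
  shows "n \<le> 2 ^ K" and "real (8 * K + 12) \<le> 28 * log 2 (real n)"
    and "real (n + 2 * n * 2 ^ K) \<le> 5 * real n ^ 2"
proof -
  show "n \<le> 2 ^ K"
    using floor_log_exp2_gt[of n] by (simp add: K_def)
  have "1 \<le> log 2 (real n)" using assms by simp
  moreover have "real K \<le> log 2 (real n) + 1"
    using assms by (simp add: K_def floor_log_altdef)
  ultimately show "real (8 * K + 12) \<le> 28 * log 2 (real n)" by simp
  have "2 ^ K \<le> 2 * n"
    using floor_log_exp2_le[of n] assms by (simp add: K_def)
  then have "n + 2 * n * 2 ^ K \<le> n * n + 2 * n * (2 * n)"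
    using assms by (intro add_mono mult_le_mono2) auto
  then have "n + 2 * n * 2 ^ K \<le> 5 * n ^ 2"
    by (simp add: power2_eq_square)
  then show "real (n + 2 * n * 2 ^ K) \<le> 5 * real n ^ 2"
    by (metis of_nat_le_iff of_nat_mult of_nat_numeral of_nat_power)
qed

lemma cnot_circuit_embedding:
  assumes n: "1 \<le> n" and valid: "valid_cnot_circuit n gs"
  shows "\<exists>m C. valid_circuit (n + m) C \<and> real (length C) \<le> 28 * log 2 (real n) \<and>
    real m \<le> 5 * real n ^ 2 \<and> embeds n m (cnot_circuit_op n gs) (circuit_op (n + m) C)"
proof (cases "n = 1")
  case True
  (* log 2 1 = 0 forces depth 0; fortunately no CNOT fits on a single qubit *)
  then have "cnots gs = cnots []"
    using valid by (cases gs) (auto simp: valid_cnot_circuit_def)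
  then show ?thesis
    using embeds_cnot_layers[of "[]" n 0 gs] valid True by auto
next
  case False
  define K where "K = Suc (floor_log n)"
  define m where "m = n + 2 * n * 2 ^ K"
  have n2: "2 \<le> n" using n False by simp
  obtain Ls where layers: "\<forall>L \<in> set Ls. cnot_layer L \<and> valid_cnot_circuit (n + m) L"
    and length: "length Ls = 8 * K + 12"
    and agree: "\<And>x. x < 2 ^ n \<Longrightarrow> cnots (concat Ls) x = cnots gs x"
    using cnot_circuit_log_depth[OF valid depth_and_ancilla_bounds(1)[OF n2]]
    by (auto simp: K_def m_def)
  show ?thesis
    using embeds_cnot_layers[OF layers valid agree] length
      depth_and_ancilla_bounds(2,3)[OF n2]
    by (intro exI[where x = m] exI[where x = "map cnot_gates Ls"]) (simp add: K_def m_def)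
qed

theorem proposition6:
  shows "(\<exists>c1 c2 :: real. \<forall>n \<ge> 1. \<forall>gs. valid_cnot_circuit n gs \<longrightarrow>
            (\<exists>m C. valid_circuit (n + m) C \<and> real (length C) \<le> c1 * log 2 (real n) \<and>
                   real m \<le> c2 * real n ^ 2 \<and>
                   embeds n m (cnot_circuit_op n gs) (circuit_op (n + m) C)))
       \<and> (\<forall>Cs :: nat \<Rightarrow> (nat \<times> nat) list. (\<forall>n \<ge> 1. valid_cnot_circuit n (Cs n)) \<longrightarrow>
            in_QNC1 (\<lambda>n. cnot_circuit_op n (Cs n)))"
  using cnot_circuit_embedding unitary_cnot_circuit_op unfolding in_QNC1_def by blast

end
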